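(* Let $K$ be a knot with Alexander polynomial $\Delta_K(t)$, and let $\theta\in\mathbb{R}$. There exists a non-trivial coloring of a diagram of $K$ by $\mathrm{Rot}(\mathbb{E}^2)$ all of whose rotation angles equal $\theta$ (i.e. every arc receives a color of the form $(z,e^{\theta\sqrt{-1}})$) if and only if $\Delta_K(e^{\theta\sqrt{-1}})=0$. Consequently, $K$ is $\mathrm{Rot}(\mathbb{E}^2)$-colorable if and only if $\Delta_K(t)$ has a root on the unit circle in $\mathbb{C}$.
   Context: $\mathrm{Rot}(\mathbb{E}^2)$ denotes the quandle of all rotations of the Euclidean plane, identified with $\mathbb{C}\times \mathrm{U}(1)$ with binary operation $(z,e^{\theta\sqrt{-1}})\ast(w,e^{\eta\sqrt{-1}})=((z-w)e^{\eta\sqrt{-1}}+w,\;e^{\theta\sqrt{-1}})$; the element $(z,e^{\theta\sqrt{-1}})$ is the rotation about $z$ by angle $\theta$. A coloring of an oriented knot diagram $D$ by a quandle $X$ is a map from the set of arcs of $D$ to $X$ such that at every crossing with over arc colored $y$, incoming under arc colored $x$ and outgoing under arc colored $x'$, one has $x'=x\ast y$ if the crossing is positive and $x'\ast y=x$ if it is negative. A constant map is a coloring, called trivial. A knot is $X$-colorable if some diagram of it admits a non-trivial coloring by $X$ (this is independent of the diagram since colorings correspond bijectively under Reidemeister moves). *)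

theory Defs
  imports Complex_Main "Jordan_Normal_Form.Determinant"
    "HOL-Computational_Algebra.Polynomial_Factorial"
begin

(* The quandle Rot(E^2): carrier C x U(1), elements are pairs (z,u) with |u| = 1,
   (z,u) is the rotation about z by the angle arg u. *)
definition rot_carrier :: "(complex \<times> complex) set" where
  "rot_carrier = {(z, u). cmod u = 1}"

definition rot_op :: "complex \<times> complex \<Rightarrow> complex \<times> complex \<Rightarrow> complex \<times> complex" where
  "rot_op x y = ((fst x - fst y) * snd y + fst y, snd x)"

(* Walking along the oriented knot, the under-passages cut it into n arcs, numbered
   0..n-1 in order of traversal.  Crossing i is the crossing at which arc i ends:
   its incoming under arc is i, its outgoing under arc is (i+1) mod n, its over arc is
   dg_over D i, and dg_pos D i says whether the crossing is positive. *)
record knot_diagram =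
  dg_n :: nat
  dg_over :: "nat \<Rightarrow> nat"
  dg_pos :: "nat \<Rightarrow> bool"

definition wf_diagram :: "knot_diagram \<Rightarrow> bool" where
  "wf_diagram D \<longleftrightarrow> dg_n D \<ge> 1 \<and> (\<forall>i < dg_n D. dg_over D i < dg_n D)"

definition is_coloring ::
  "'a set \<Rightarrow> ('a \<Rightarrow> 'a \<Rightarrow> 'a) \<Rightarrow> knot_diagram \<Rightarrow> (nat \<Rightarrow> 'a) \<Rightarrow> bool" where
  "is_coloring X op D c \<longleftrightarrow>
     (\<forall>i < dg_n D. c i \<in> X) \<and>
     (\<forall>i < dg_n D.
        (dg_pos D i \<longrightarrow> c (Suc i mod dg_n D) = op (c i) (c (dg_over D i))) \<and>
        (\<not> dg_pos D i \<longrightarrow> op (c (Suc i mod dg_n D)) (c (dg_over D i)) = c i))"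

definition trivial_coloring :: "knot_diagram \<Rightarrow> (nat \<Rightarrow> 'a) \<Rightarrow> bool" where
  "trivial_coloring D c \<longleftrightarrow> (\<forall>i < dg_n D. \<forall>j < dg_n D. c i = c j)"

definition rot_colorable :: "knot_diagram \<Rightarrow> bool" where
  "rot_colorable D \<longleftrightarrow>
     (\<exists>c. is_coloring rot_carrier rot_op D c \<and> \<not> trivial_coloring D c)"

(* Alexander matrix of the diagram (Fox calculus of the Wirtinger presentation),
   entries in Z[t]:
   positive crossing i:  -t x_i + x_{i+1} + (t-1) x_{over i}
   negative crossing i:  -x_i + t x_{i+1} + (1-t) x_{over i} *)
definition alexander_matrix :: "knot_diagram \<Rightarrow> int poly mat" where
  "alexander_matrix D = mat (dg_n D) (dg_n D) (\<lambda>(i, j).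
      (if j = i then (if dg_pos D i then - [:0, 1:] else -1) else 0)
    + (if j = Suc i mod dg_n D then (if dg_pos D i then 1 else [:0, 1:]) else 0)
    + (if j = dg_over D i then (if dg_pos D i then [:-1, 1:] else [:1, -1:]) else 0))"

(* Alexander polynomial: generator (gcd) of the first elementary ideal,
   i.e. gcd of all (n-1)x(n-1) minors of the Alexander matrix. *)
definition alexander_poly :: "knot_diagram \<Rightarrow> int poly" where
  "alexander_poly D = Gcd {det (mat_delete (alexander_matrix D) r s) | r s.
                              r < dg_n D \<and> s < dg_n D}"

end

theory Submission
  imports Defs "Jordan_Normal_Form.Char_Poly"
begin

text \<open>
  Colorings of a diagram by rotations of the plane that all have the same angle \<open>u\<close>
  (\<open>|u| = 1\<close>) are determined by the centres \<open>z\<^sub>i\<close> of the rotations, and the crossing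
  relations are exactly the linear equations given by the rows of the Alexander matrix
  evaluated at \<open>t = u\<close>.  Since every row has coefficient sum zero, translating a solution
  gives a solution, so a non-constant solution exists iff, for each arc \<open>s\<close>, there is a
  non-zero solution vanishing at \<open>s\<close>.  By elementary linear algebra this happens iff all
  \<open>(n-1)\<times>(n-1)\<close> minors obtained by deleting column \<open>s\<close> vanish.  As evaluation commutes
  with determinants and a point is a root of the Gcd of finitely many integer polynomials iff
  it is a common root of all of them, this says precisely \<open>\<Delta>\<^sub>K(u) = 0\<close>.  Finally, all arcs
  of any coloring carry the same angle, which gives the colorability criterion.
\<close>

section \<open>Evaluating integer polynomials\<close>

definition eval_int_poly :: "'a::{idom,ring_char_0} \<Rightarrow> int poly \<Rightarrow> 'a" where
  "eval_int_poly u p = poly (map_poly of_int p) u"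

interpretation eval_int_poly: comm_ring_hom "eval_int_poly u"
  by unfold_locales
    (simp_all add: eval_int_poly_def of_int_poly_hom.hom_mult of_int_poly_hom.hom_add)

declare eval_int_poly.hom_add [simp] eval_int_poly.hom_mult [simp] eval_int_poly.hom_uminus [simp]

lemma eval_int_poly_smult: "eval_int_poly u (Polynomial.smult c p) = of_int c * eval_int_poly u p"
  by (simp add: eval_int_poly_def map_poly_smult)

lemma eval_int_poly_pCons [simp]: "eval_int_poly u (pCons a p) = of_int a + u * eval_int_poly u p"
  by (cases "a = 0 \<and> p = 0") (auto simp: eval_int_poly_def map_poly_pCons)

lemma eval_int_poly_dvd: "eval_int_poly u p = 0 \<Longrightarrow> p dvd q \<Longrightarrow> eval_int_poly u q = 0"
  by (elim dvdE) simp

text \<open>The operations of the library's gcd algorithm for integer polynomials (primitive part and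
  pseudo-remainder) preserve common roots in any domain of characteristic zero.\<close>

lemma eval_int_poly_primitive_part:
  assumes "eval_int_poly u p = 0"
  shows "eval_int_poly u (primitive_part p) = 0"
proof (cases "p = 0")
  case False
  have "eval_int_poly u p = of_int (content p) * eval_int_poly u (primitive_part p)"
    by (metis content_times_primitive_part eval_int_poly_smult)
  with assms False show ?thesis by simp
qed simp

lemma eval_int_poly_pseudo_mod:
  assumes "eval_int_poly u p = 0" "eval_int_poly u q = 0" "q \<noteq> 0"
  shows "eval_int_poly u (pseudo_mod p q) = 0"
proof -
  have "Polynomial.smult (coeff q (degree q) ^ (Suc (degree p) - degree q)) p
          = q * fst (pseudo_divmod p q) + pseudo_mod p q"
    using pseudo_divmod(1)[OF assms(3) surjective_pairing] by (simp add: pseudo_mod_def)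
  from arg_cong[OF this, of "eval_int_poly u"] assms show ?thesis
    by (simp add: eval_int_poly_smult)
qed

lemma eval_int_poly_gcd_poly_code_aux:
  "eval_int_poly u p = 0 \<Longrightarrow> eval_int_poly u q = 0 \<Longrightarrow> eval_int_poly u (gcd_poly_code_aux p q) = 0"
proof (induction p q rule: gcd_poly_code_aux.induct)
  case (1 p q)
  show ?case
  proof (cases "q = 0")
    case True
    then show ?thesis
      using "1.prems" by (subst gcd_poly_code_aux.simps) (simp add: eval_int_poly_dvd[of u p])
  next
    case False
    then show ?thesis
      using "1.prems" by (subst gcd_poly_code_aux.simps)
        (simp add: "1.IH" eval_int_poly_primitive_part eval_int_poly_pseudo_mod)
  qed
qed

lemma eval_int_poly_gcd:
  "eval_int_poly u (gcd p q) = 0 \<longleftrightarrow> eval_int_poly u p = 0 \<and> eval_int_poly u q = 0"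
proof
  assume "eval_int_poly u (gcd p q) = 0"
  then show "eval_int_poly u p = 0 \<and> eval_int_poly u q = 0"
    using eval_int_poly_dvd by blast
next
  assume roots: "eval_int_poly u p = 0 \<and> eval_int_poly u q = 0"
  have "eval_int_poly u (gcd_poly_code p q) = 0"
  proof (cases "p = 0 \<or> q = 0")
    case True
    then show ?thesis
      using roots eval_int_poly_dvd[of u q "normalize q"] eval_int_poly_dvd[of u p "normalize p"]
      by (auto simp: gcd_poly_code_def)
  next
    case False
    then show ?thesis
      using roots by (simp add: gcd_poly_code_def eval_int_poly_smult
          eval_int_poly_gcd_poly_code_aux eval_int_poly_primitive_part)
  qed
  then show "eval_int_poly u (gcd p q) = 0"
    by (simp only: gcd_poly_code)
qed

lemma eval_int_poly_Gcd:
  assumes "finite S"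
  shows "eval_int_poly u (Gcd S) = 0 \<longleftrightarrow> (\<forall>p\<in>S. eval_int_poly u p = 0)"
  using assms by (induction S rule: finite_induct) (simp_all add: eval_int_poly_gcd)

section \<open>Kernel vectors with a prescribed zero coordinate\<close>

lemma mult_mat_vec_index:
  assumes "A \<in> carrier_mat m n" "v \<in> carrier_vec n" "i < m"
  shows "(A *\<^sub>v v) $ i = (\<Sum>j<n. A $$ (i, j) * v $ j)"
  using assms by (auto simp: scalar_prod_def atLeast0LessThan intro!: sum.cong)

lemma replace_col_carrier [simp]: "A \<in> carrier_mat n m \<Longrightarrow> replace_col A b k \<in> carrier_mat n m"
  by (simp add: replace_col_def)

lemma mult_vec_replace_col_zero_coord:
  fixes A :: "'a::comm_ring_1 mat"
  assumes A: "A \<in> carrier_mat n n" and v: "v \<in> carrier_vec n" and vk: "v $ k = 0"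
  shows "replace_col A b k *\<^sub>v v = A *\<^sub>v v"
proof (rule eq_vecI)
  fix i assume "i < dim_vec (A *\<^sub>v v)"
  then have i: "i < n" using A by simp
  have "(replace_col A b k *\<^sub>v v) $ i = (\<Sum>j<n. replace_col A b k $$ (i, j) * v $ j)"
    by (rule mult_mat_vec_index[OF replace_col_carrier[OF A] v i])
  also have "\<dots> = (\<Sum>j<n. A $$ (i, j) * v $ j)"
    using A i vk by (intro sum.cong) (auto simp: replace_col_def)
  also have "\<dots> = (A *\<^sub>v v) $ i"
    by (rule mult_mat_vec_index[OF A v i, symmetric])
  finally show "(replace_col A b k *\<^sub>v v) $ i = (A *\<^sub>v v) $ i" .
qed (use A in \<open>simp add: replace_col_def\<close>)

lemma mult_vec_replace_col:
  fixes A :: "'a::comm_ring_1 mat"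
  assumes A: "A \<in> carrier_mat n n" and b: "b \<in> carrier_vec n" and v: "v \<in> carrier_vec n"
    and k: "k < n" and i: "i < n"
  shows "(replace_col A b k *\<^sub>v v) $ i = (replace_col A (0\<^sub>v n) k *\<^sub>v v) $ i + v $ k * b $ i"
proof -
  have split: "replace_col A b k $$ (i, j) * v $ j
      = replace_col A (0\<^sub>v n) k $$ (i, j) * v $ j + (if j = k then v $ k * b $ i else 0)"
    if "j < n" for j
    using A i that by (simp add: replace_col_def)
  have "(replace_col A b k *\<^sub>v v) $ i = (\<Sum>j<n. replace_col A b k $$ (i, j) * v $ j)"
    by (rule mult_mat_vec_index[OF replace_col_carrier[OF A] v i])
  also have "\<dots> = (\<Sum>j<n. replace_col A (0\<^sub>v n) k $$ (i, j) * v $ j) + v $ k * b $ i"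
    using k by (simp add: split sum.distrib)
  also have "(\<Sum>j<n. replace_col A (0\<^sub>v n) k $$ (i, j) * v $ j) = (replace_col A (0\<^sub>v n) k *\<^sub>v v) $ i"
    by (rule mult_mat_vec_index[OF replace_col_carrier[OF A] v i, symmetric])
  finally show ?thesis .
qed

lemma det_replace_col_unit_vec:
  fixes M :: "'a::comm_ring_1 mat"
  assumes M: "M \<in> carrier_mat n n" and r: "r < n" and s: "s < n"
  shows "det (replace_col M (unit_vec n r) s) = (-1) ^ (r + s) * det (mat_delete M r s)"
proof -
  let ?N = "replace_col M (unit_vec n r) s"
  have N: "?N \<in> carrier_mat n n" using M by simp
  have "det ?N = (\<Sum>i<n. ?N $$ (i, s) * cofactor ?N i s)"
    by (rule laplace_expansion_column[OF N s])
  also have "\<dots> = (\<Sum>i<n. if i = r then cofactor ?N i s else 0)"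
    using M r s by (intro sum.cong) (auto simp: replace_col_def)
  also have "\<dots> = cofactor ?N r s" using r by simp
  also have "mat_delete ?N r s = mat_delete M r s"
    using M s r by (intro eq_matI) (auto simp: mat_delete_def replace_col_def)
  then have "cofactor ?N r s = (-1) ^ (r + s) * det (mat_delete M r s)"
    by (simp add: cofactor_def)
  finally show ?thesis .
qed

text \<open>If every replacement of column \<open>s\<close> by a unit vector is singular, then \<open>M\<close> has a non-zero
  kernel vector with \<open>s\<close>-th coordinate zero.  Otherwise the kernel vectors \<open>v\<^sub>r\<close> of the
  replaced matrices all have \<open>v\<^sub>r $ s \<noteq> 0\<close>, so the matrix \<open>M\<^sub>0\<close> with column \<open>s\<close> erased maps
  suitable multiples of them onto the unit vectors: \<open>M\<^sub>0\<close> would be invertible although it kills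
  the \<open>s\<close>-th unit vector.\<close>

lemma kernel_vector_from_singular_replacements:
  fixes M :: "'a::field mat"
  assumes M: "M \<in> carrier_mat n n" and s: "s < n"
    and singular: "\<And>r. r < n \<Longrightarrow> det (replace_col M (unit_vec n r) s) = 0"
  shows "\<exists>w \<in> carrier_vec n. w \<noteq> 0\<^sub>v n \<and> w $ s = 0 \<and> M *\<^sub>v w = 0\<^sub>v n"
proof (rule ccontr)
  assume no_kernel: "\<not> ?thesis"
  define M0 where "M0 = replace_col M (0\<^sub>v n) s"
  have M0: "M0 \<in> carrier_mat n n" using M by (simp add: M0_def)
  have "\<forall>r. \<exists>x. r < n \<longrightarrow> x \<in> carrier_vec n \<and> x \<noteq> 0\<^sub>v n
      \<and> replace_col M (unit_vec n r) s *\<^sub>v x = 0\<^sub>v n"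
    using singular det_0_iff_vec_prod_zero_field[OF replace_col_carrier[OF M]] by blast
  then obtain v where v: "\<And>r. r < n \<Longrightarrow> v r \<in> carrier_vec n \<and> v r \<noteq> 0\<^sub>v n
      \<and> replace_col M (unit_vec n r) s *\<^sub>v v r = 0\<^sub>v n"
    by metis
  have vs: "v r $ s \<noteq> 0" if r: "r < n" for r
  proof
    assume "v r $ s = 0"
    then have "M *\<^sub>v v r = 0\<^sub>v n"
      using v[OF r] mult_vec_replace_col_zero_coord[OF M, of "v r" s "unit_vec n r"] by simp
    then show False using no_kernel v[OF r] \<open>v r $ s = 0\<close> by blast
  qed
  have image: "M0 *\<^sub>v v r = - (v r $ s) \<cdot>\<^sub>v unit_vec n r" if r: "r < n" for r
  proof (rule eq_vecI)
    fix i assume "i < dim_vec (- (v r $ s) \<cdot>\<^sub>v unit_vec n r)"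
    then have i: "i < n" by simp
    have "0 = (replace_col M (unit_vec n r) s *\<^sub>v v r) $ i"
      using v[OF r] i by simp
    also have "\<dots> = (M0 *\<^sub>v v r) $ i + v r $ s * unit_vec n r $ i"
      unfolding M0_def using mult_vec_replace_col[OF M unit_vec_carrier _ s i] v[OF r] by blast
    finally show "(M0 *\<^sub>v v r) $ i = (- (v r $ s) \<cdot>\<^sub>v unit_vec n r) $ i"
      using i by (simp add: eq_neg_iff_add_eq_0)
  qed (use M0 in simp)
  define x where "x r = (- 1 / v r $ s) \<cdot>\<^sub>v v r" for r
  have x: "x r \<in> carrier_vec n" "M0 *\<^sub>v x r = unit_vec n r" if r: "r < n" for r
  proof -
    show "x r \<in> carrier_vec n" using v[OF r] by (simp add: x_def)
    have "M0 *\<^sub>v x r = (- 1 / v r $ s) \<cdot>\<^sub>v (M0 *\<^sub>v v r)"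
      using M0 v[OF r] by (simp add: x_def mult_mat_vec)
    also have "\<dots> = unit_vec n r"
      using vs[OF r] by (simp add: image[OF r] smult_smult_assoc)
    finally show "M0 *\<^sub>v x r = unit_vec n r" .
  qed
  define B where "B = mat n n (\<lambda>(j, r). x r $ j)"
  have B: "B \<in> carrier_mat n n" by (simp add: B_def)
  have "M0 * B = 1\<^sub>m n"
  proof (rule mat_col_eqI)
    fix r assume "r < dim_col (1\<^sub>m n :: 'a mat)"
    then have r: "r < n" by simp
    have "col B r = x r"
      using x(1)[OF r] r by (intro eq_vecI) (simp_all add: B_def)
    then show "col (M0 * B) r = col (1\<^sub>m n) r"
      by (simp only: col_mult2[OF M0 B r] x(2)[OF r] col_one[OF r])
  qed (use M0 B in simp_all)
  then have "det M0 * det B = 1" using det_mult[OF M0 B] by simp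
  moreover have "M0 *\<^sub>v unit_vec n s = 0\<^sub>v n"
  proof (rule eq_vecI)
    fix i assume "i < dim_vec (0\<^sub>v n :: 'a vec)"
    then have i: "i < n" by simp
    have "(M0 *\<^sub>v unit_vec n s) $ i = (\<Sum>j<n. M0 $$ (i, j) * unit_vec n s $ j)"
      by (rule mult_mat_vec_index[OF M0 unit_vec_carrier i])
    also have "\<dots> = 0"
      using M i s by (intro sum.neutral ballI) (simp add: M0_def replace_col_def)
    finally show "(M0 *\<^sub>v unit_vec n s) $ i = 0\<^sub>v n $ i" using i by simp
  qed (use M0 in simp)
  then have "det M0 = 0"
    using det_0_iff_vec_prod_zero_field[OF M0] unit_vec_carrier[of n s] unit_vec_nonzero[OF s]
    by blast
  ultimately show False by simp
qed

lemma kernel_vector_iff_minors: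
  fixes M :: "'a::field mat"
  assumes M: "M \<in> carrier_mat n n" and s: "s < n"
  shows "(\<exists>w \<in> carrier_vec n. w \<noteq> 0\<^sub>v n \<and> w $ s = 0 \<and> M *\<^sub>v w = 0\<^sub>v n)
     \<longleftrightarrow> (\<forall>r<n. det (mat_delete M r s) = 0)"
proof
  assume "\<exists>w \<in> carrier_vec n. w \<noteq> 0\<^sub>v n \<and> w $ s = 0 \<and> M *\<^sub>v w = 0\<^sub>v n"
  then obtain w where w: "w \<in> carrier_vec n" "w \<noteq> 0\<^sub>v n" "w $ s = 0" "M *\<^sub>v w = 0\<^sub>v n"
    by blast
  show "\<forall>r<n. det (mat_delete M r s) = 0"
  proof (intro allI impI)
    fix r assume r: "r < n"
    have "replace_col M (unit_vec n r) s *\<^sub>v w = 0\<^sub>v n"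
      using mult_vec_replace_col_zero_coord[OF M w(1) w(3)] w(4) by simp
    then have "det (replace_col M (unit_vec n r) s) = 0"
      using det_0_iff_vec_prod_zero_field[OF replace_col_carrier[OF M]] w by blast
    then show "det (mat_delete M r s) = 0"
      using det_replace_col_unit_vec[OF M r s] by simp
  qed
next
  assume "\<forall>r<n. det (mat_delete M r s) = 0"
  then show "\<exists>w \<in> carrier_vec n. w \<noteq> 0\<^sub>v n \<and> w $ s = 0 \<and> M *\<^sub>v w = 0\<^sub>v n"
    by (intro kernel_vector_from_singular_replacements[OF M s]) (simp add: det_replace_col_unit_vec[OF M _ s])
qed

section \<open>Colorings with a fixed rotation angle\<close>

definition crossing_relation ::
  "('a \<Rightarrow> 'a \<Rightarrow> 'a) \<Rightarrow> knot_diagram \<Rightarrow> (nat \<Rightarrow> 'a) \<Rightarrow> nat \<Rightarrow> bool" where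
  "crossing_relation op D c i \<longleftrightarrow>
     (dg_pos D i \<longrightarrow> c (Suc i mod dg_n D) = op (c i) (c (dg_over D i))) \<and>
     (\<not> dg_pos D i \<longrightarrow> op (c (Suc i mod dg_n D)) (c (dg_over D i)) = c i)"

lemma is_coloring_iff:
  "is_coloring X op D c \<longleftrightarrow>
     (\<forall>i < dg_n D. c i \<in> X) \<and> (\<forall>i < dg_n D. crossing_relation op D c i)"
  by (simp add: is_coloring_def crossing_relation_def)

text \<open>Row \<open>i\<close> of the Alexander matrix, evaluated at \<open>t = u\<close>, as a linear form in the centres
  \<open>z\<close> of the rotations coloring the arcs.\<close>

definition crossing_form :: "knot_diagram \<Rightarrow> complex \<Rightarrow> (nat \<Rightarrow> complex) \<Rightarrow> nat \<Rightarrow> complex" where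
  "crossing_form D u z i =
     (if dg_pos D i
      then - u * z i + z (Suc i mod dg_n D) + (u - 1) * z (dg_over D i)
      else - z i + u * z (Suc i mod dg_n D) + (1 - u) * z (dg_over D i))"

lemma crossing_indices:
  assumes "wf_diagram D" "i < dg_n D"
  shows "Suc i mod dg_n D < dg_n D" "dg_over D i < dg_n D"
  using assms by (auto simp: wf_diagram_def)

lemma crossing_form_cong:
  assumes "wf_diagram D" "i < dg_n D" "\<And>j. j < dg_n D \<Longrightarrow> z j = z' j"
  shows "crossing_form D u z i = crossing_form D u z' i"
  using assms crossing_indices[OF assms(1,2)] by (simp add: crossing_form_def)

text \<open>The coefficients of each row sum to zero, so translating all centres changes nothing.\<close>

lemma crossing_form_translate: "crossing_form D u (\<lambda>j. z j - k) i = crossing_form D u z i"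
  by (simp add: crossing_form_def algebra_simps)

lemma crossing_relation_rot_iff:
  assumes wf: "wf_diagram D" and i: "i < dg_n D" and c: "\<And>k. k < dg_n D \<Longrightarrow> c k = (z k, u)"
  shows "crossing_relation rot_op D c i \<longleftrightarrow> crossing_form D u z i = 0"
proof -
  let ?s = "Suc i mod dg_n D" and ?o = "dg_over D i"
  have colors: "c i = (z i, u)" "c ?s = (z ?s, u)" "c ?o = (z ?o, u)"
    using c i crossing_indices[OF wf i] by auto
  show ?thesis
  proof (cases "dg_pos D i")
    case True
    have "z ?s = (z i - z ?o) * u + z ?o \<longleftrightarrow> - u * z i + z ?s + (u - 1) * z ?o = 0"
      by (auto simp: algebra_simps)
    with True show ?thesis by (simp add: crossing_relation_def crossing_form_def rot_op_def colors)
  next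
    case False
    have "(z ?s - z ?o) * u + z ?o = z i \<longleftrightarrow> - z i + u * z ?s + (1 - u) * z ?o = 0"
      by (auto simp: algebra_simps)
    with False show ?thesis by (simp add: crossing_relation_def crossing_form_def rot_op_def colors)
  qed
qed

lemma constant_angle_coloring_iff_solution:
  assumes wf: "wf_diagram D" and u: "cmod u = 1"
  shows "(\<exists>c. is_coloring rot_carrier rot_op D c \<and> \<not> trivial_coloring D c \<and>
              (\<forall>i < dg_n D. snd (c i) = u))
     \<longleftrightarrow> (\<exists>z. (\<forall>i < dg_n D. crossing_form D u z i = 0) \<and>
              \<not> (\<forall>i < dg_n D. \<forall>j < dg_n D. z i = z j))"
proof
  assume "\<exists>c. is_coloring rot_carrier rot_op D c \<and> \<not> trivial_coloring D c \<and>
              (\<forall>i < dg_n D. snd (c i) = u)"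
  then obtain c where col: "is_coloring rot_carrier rot_op D c"
    and nontrivial: "\<not> trivial_coloring D c" and angle: "\<forall>i < dg_n D. snd (c i) = u"
    by blast
  define z where "z k = fst (c k)" for k
  have c: "c k = (z k, u)" if "k < dg_n D" for k
    using angle that by (simp add: z_def prod_eq_iff)
  have "\<forall>i < dg_n D. crossing_form D u z i = 0"
    using col crossing_relation_rot_iff[OF wf _ c] by (simp add: is_coloring_iff)
  moreover have "\<not> (\<forall>i < dg_n D. \<forall>j < dg_n D. z i = z j)"
    using nontrivial c by (auto simp: trivial_coloring_def)
  ultimately show "\<exists>z. (\<forall>i < dg_n D. crossing_form D u z i = 0) \<and>
              \<not> (\<forall>i < dg_n D. \<forall>j < dg_n D. z i = z j)"
    by blast
next
  assume "\<exists>z. (\<forall>i < dg_n D. crossing_form D u z i = 0) \<and>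
              \<not> (\<forall>i < dg_n D. \<forall>j < dg_n D. z i = z j)"
  then obtain z where solution: "\<forall>i < dg_n D. crossing_form D u z i = 0"
    and nonconstant: "\<not> (\<forall>i < dg_n D. \<forall>j < dg_n D. z i = z j)"
    by blast
  define c where "c k = (z k, u)" for k
  have "is_coloring rot_carrier rot_op D c"
    using solution u crossing_relation_rot_iff[OF wf, of _ c z u]
    by (simp add: is_coloring_iff rot_carrier_def c_def)
  moreover have "\<not> trivial_coloring D c"
    using nonconstant by (simp add: trivial_coloring_def c_def)
  ultimately show "\<exists>c. is_coloring rot_carrier rot_op D c \<and> \<not> trivial_coloring D c \<and>
              (\<forall>i < dg_n D. snd (c i) = u)"
    by (auto simp: c_def)
qed

section \<open>The Alexander matrix at a point\<close>

definition alexander_matrix_at :: "knot_diagram \<Rightarrow> complex \<Rightarrow> complex mat" where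
  "alexander_matrix_at D u = map_mat (eval_int_poly u) (alexander_matrix D)"

lemma alexander_matrix_at_carrier: "alexander_matrix_at D u \<in> carrier_mat (dg_n D) (dg_n D)"
  by (simp add: alexander_matrix_at_def alexander_matrix_def)

lemma alexander_matrix_at_mult_vec:
  assumes wf: "wf_diagram D" and i: "i < dg_n D" and w: "w \<in> carrier_vec (dg_n D)"
  shows "(alexander_matrix_at D u *\<^sub>v w) $ i = crossing_form D u (\<lambda>j. w $ j) i"
proof -
  let ?n = "dg_n D" and ?s = "Suc i mod dg_n D" and ?o = "dg_over D i"
  define a b c where "a = (if dg_pos D i then - u else -1)" and "b = (if dg_pos D i then 1 else u)"
    and "c = (if dg_pos D i then u - 1 else 1 - u)"
  have entry: "alexander_matrix_at D u $$ (i, j) * w $ j =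
      (if j = i then a * w $ i else 0) + (if j = ?s then b * w $ ?s else 0)
      + (if j = ?o then c * w $ ?o else 0)" if j: "j < ?n" for j
    using i j by (cases "dg_pos D i")
      (auto simp: alexander_matrix_at_def alexander_matrix_def a_def b_def c_def algebra_simps)
  have "(alexander_matrix_at D u *\<^sub>v w) $ i = (\<Sum>j<?n. alexander_matrix_at D u $$ (i, j) * w $ j)"
    by (rule mult_mat_vec_index[OF alexander_matrix_at_carrier w i])
  also have "\<dots> = a * w $ i + b * w $ ?s + c * w $ ?o"
    using i crossing_indices[OF wf i] by (simp add: entry sum.distrib)
  finally show ?thesis
    by (simp add: crossing_form_def a_def b_def c_def)
qed

lemma alexander_matrix_at_kernel_iff:
  assumes wf: "wf_diagram D" and w: "w \<in> carrier_vec (dg_n D)"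
  shows "alexander_matrix_at D u *\<^sub>v w = 0\<^sub>v (dg_n D)
     \<longleftrightarrow> (\<forall>i < dg_n D. crossing_form D u (\<lambda>j. w $ j) i = 0)"
  using alexander_matrix_at_carrier[of D u]
  by (auto simp: vec_eq_iff alexander_matrix_at_mult_vec[OF wf _ w] simp del: index_mult_mat_vec)

text \<open>A non-constant solution of the crossing relations can be normalized, by translation, to
  vanish at any prescribed arc \<open>s\<close>.\<close>

lemma nonconstant_solution_iff_kernel_vector:
  assumes wf: "wf_diagram D" and s: "s < dg_n D"
  shows "(\<exists>z. (\<forall>i < dg_n D. crossing_form D u z i = 0) \<and>
              \<not> (\<forall>i < dg_n D. \<forall>j < dg_n D. z i = z j))
     \<longleftrightarrow> (\<exists>w \<in> carrier_vec (dg_n D). w \<noteq> 0\<^sub>v (dg_n D) \<and> w $ s = 0 \<and>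
              alexander_matrix_at D u *\<^sub>v w = 0\<^sub>v (dg_n D))"
proof
  assume "\<exists>z. (\<forall>i < dg_n D. crossing_form D u z i = 0) \<and>
              \<not> (\<forall>i < dg_n D. \<forall>j < dg_n D. z i = z j)"
  then obtain z i0 j0 where solution: "\<forall>i < dg_n D. crossing_form D u z i = 0"
    and i0: "i0 < dg_n D" and j0: "j0 < dg_n D" and differ: "z i0 \<noteq> z j0"
    by blast
  define w where "w = vec (dg_n D) (\<lambda>j. z j - z s)"
  have w: "w \<in> carrier_vec (dg_n D)" by (simp add: w_def)
  have "crossing_form D u (\<lambda>j. w $ j) i = 0" if i: "i < dg_n D" for i
  proof -
    have "crossing_form D u (\<lambda>j. w $ j) i = crossing_form D u (\<lambda>j. z j - z s) i"
      by (rule crossing_form_cong[OF wf i]) (simp add: w_def)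
    then show ?thesis using solution i by (simp add: crossing_form_translate)
  qed
  moreover have "w \<noteq> 0\<^sub>v (dg_n D)"
  proof
    assume "w = 0\<^sub>v (dg_n D)"
    then have "w $ i0 = 0" "w $ j0 = 0" using i0 j0 by auto
    then show False using differ i0 j0 by (simp add: w_def)
  qed
  ultimately show "\<exists>w \<in> carrier_vec (dg_n D). w \<noteq> 0\<^sub>v (dg_n D) \<and> w $ s = 0 \<and>
              alexander_matrix_at D u *\<^sub>v w = 0\<^sub>v (dg_n D)"
    using w s alexander_matrix_at_kernel_iff[OF wf w] by (auto simp: w_def)
next
  assume "\<exists>w \<in> carrier_vec (dg_n D). w \<noteq> 0\<^sub>v (dg_n D) \<and> w $ s = 0 \<and>
              alexander_matrix_at D u *\<^sub>v w = 0\<^sub>v (dg_n D)"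
  then obtain w where w: "w \<in> carrier_vec (dg_n D)" and nonzero: "w \<noteq> 0\<^sub>v (dg_n D)"
    and ws: "w $ s = 0" and kernel: "alexander_matrix_at D u *\<^sub>v w = 0\<^sub>v (dg_n D)"
    by blast
  obtain i where i: "i < dg_n D" and wi: "w $ i \<noteq> 0"
    using nonzero w by (auto simp: vec_eq_iff)
  have "\<not> (\<forall>i < dg_n D. \<forall>j < dg_n D. w $ i = w $ j)"
    using i wi s ws by metis
  with kernel show "\<exists>z. (\<forall>i < dg_n D. crossing_form D u z i = 0) \<and>
              \<not> (\<forall>i < dg_n D. \<forall>j < dg_n D. z i = z j)"
    using alexander_matrix_at_kernel_iff[OF wf w] by blast
qed

text \<open>Evaluation commutes with determinants, so the minors of the evaluated matrix are the
  evaluated minors; by the Gcd lemma they all vanish iff \<open>u\<close> is a root of \<open>\<Delta>\<^sub>K\<close>.\<close>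

lemma alexander_poly_root_iff_minors:
  "eval_int_poly u (alexander_poly D) = 0 \<longleftrightarrow>
     (\<forall>s < dg_n D. \<forall>r < dg_n D. det (mat_delete (alexander_matrix_at D u) r s) = 0)"
proof -
  have minor: "det (mat_delete (alexander_matrix_at D u) r s)
      = eval_int_poly u (det (mat_delete (alexander_matrix D) r s))" for r s
  proof -
    have "mat_delete (alexander_matrix_at D u) r s
        = map_mat (eval_int_poly u) (mat_delete (alexander_matrix D) r s)"
      by (intro eq_matI) (auto simp: alexander_matrix_at_def mat_delete_def alexander_matrix_def)
    then show ?thesis by simp
  qed
  have "finite {det (mat_delete (alexander_matrix D) r s) | r s. r < dg_n D \<and> s < dg_n D}"
    by (rule finite_image_set2) auto
  from eval_int_poly_Gcd[OF this] show ?thesis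
    unfolding alexander_poly_def minor by blast
qed

section \<open>Rotation colorings and roots of the Alexander polynomial\<close>

lemma constant_angle_coloring_iff_root:
  assumes wf: "wf_diagram D" and u: "cmod u = 1"
  shows "(\<exists>c. is_coloring rot_carrier rot_op D c \<and> \<not> trivial_coloring D c \<and>
              (\<forall>i < dg_n D. snd (c i) = u))
     \<longleftrightarrow> poly (map_poly of_int (alexander_poly D)) u = 0"
proof -
  have n: "0 < dg_n D" using wf by (simp add: wf_diagram_def)
  have "(\<exists>c. is_coloring rot_carrier rot_op D c \<and> \<not> trivial_coloring D c \<and>
              (\<forall>i < dg_n D. snd (c i) = u))
     \<longleftrightarrow> (\<exists>z. (\<forall>i < dg_n D. crossing_form D u z i = 0) \<and>
              \<not> (\<forall>i < dg_n D. \<forall>j < dg_n D. z i = z j))"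
    by (rule constant_angle_coloring_iff_solution[OF wf u])
  also have "\<dots> \<longleftrightarrow> (\<forall>s < dg_n D. \<exists>w \<in> carrier_vec (dg_n D). w \<noteq> 0\<^sub>v (dg_n D) \<and> w $ s = 0 \<and>
              alexander_matrix_at D u *\<^sub>v w = 0\<^sub>v (dg_n D))"
    using nonconstant_solution_iff_kernel_vector[OF wf] n by blast
  also have "\<dots> \<longleftrightarrow> (\<forall>s < dg_n D. \<forall>r < dg_n D. det (mat_delete (alexander_matrix_at D u) r s) = 0)"
    using kernel_vector_iff_minors[OF alexander_matrix_at_carrier] by blast
  also have "\<dots> \<longleftrightarrow> eval_int_poly u (alexander_poly D) = 0"
    by (rule alexander_poly_root_iff_minors[symmetric])
  finally show ?thesis by (simp add: eval_int_poly_def)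
qed

text \<open>Rotations never change the angle of the rotation they act on, so along the knot all
  arcs of a coloring carry the same angle.\<close>

lemma snd_rot_op [simp]: "snd (rot_op x y) = snd x"
  by (simp add: rot_op_def)

lemma coloring_angle_constant:
  assumes col: "is_coloring rot_carrier rot_op D c" and i: "i < dg_n D"
  shows "snd (c i) = snd (c 0)"
  using i
proof (induction i)
  case (Suc i)
  then have i: "i < dg_n D" and next_arc: "Suc i mod dg_n D = Suc i" by auto
  have "crossing_relation rot_op D c i" using col i by (simp add: is_coloring_iff)
  then have "snd (c (Suc i)) = snd (c i)"
    using next_arc by (cases "dg_pos D i") (auto simp: crossing_relation_def dest: arg_cong[where f = snd])
  with Suc i show ?case by simp
qed simp

lemma rot_colorable_iff_constant_angle:
  assumes wf: "wf_diagram D"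
  shows "rot_colorable D \<longleftrightarrow> (\<exists>u. cmod u = 1 \<and>
      (\<exists>c. is_coloring rot_carrier rot_op D c \<and> \<not> trivial_coloring D c \<and>
           (\<forall>i < dg_n D. snd (c i) = u)))"
proof
  assume "rot_colorable D"
  then obtain c where col: "is_coloring rot_carrier rot_op D c"
    and nontrivial: "\<not> trivial_coloring D c"
    unfolding rot_colorable_def by blast
  have "c 0 \<in> rot_carrier" using col wf by (simp add: is_coloring_def wf_diagram_def)
  then have "cmod (snd (c 0)) = 1" by (auto simp: rot_carrier_def)
  with col nontrivial coloring_angle_constant[OF col]
  show "\<exists>u. cmod u = 1 \<and> (\<exists>c. is_coloring rot_carrier rot_op D c \<and> \<not> trivial_coloring D c \<and>
           (\<forall>i < dg_n D. snd (c i) = u))"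
    by blast
qed (auto simp: rot_colorable_def)

theorem mainTheorem2:
  fixes D :: knot_diagram
  assumes "wf_diagram D"
  shows "(\<forall>\<theta>::real.
            (\<exists>c. is_coloring rot_carrier rot_op D c \<and> \<not> trivial_coloring D c \<and>
                 (\<forall>i < dg_n D. snd (c i) = cis \<theta>))
            \<longleftrightarrow> poly (map_poly of_int (alexander_poly D)) (cis \<theta>) = (0::complex))
       \<and> (rot_colorable D \<longleftrightarrow>
            (\<exists>z::complex. cmod z = 1 \<and> poly (map_poly of_int (alexander_poly D)) z = 0))"
proof (intro conjI allI)
  fix \<theta> :: real
  show "(\<exists>c. is_coloring rot_carrier rot_op D c \<and> \<not> trivial_coloring D c \<and>
                 (\<forall>i < dg_n D. snd (c i) = cis \<theta>))
            \<longleftrightarrow> poly (map_poly of_int (alexander_poly D)) (cis \<theta>) = 0"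
    by (rule constant_angle_coloring_iff_root[OF assms]) simp
next
  show "rot_colorable D \<longleftrightarrow>
      (\<exists>z::complex. cmod z = 1 \<and> poly (map_poly of_int (alexander_poly D)) z = 0)"
    using rot_colorable_iff_constant_angle[OF assms] constant_angle_coloring_iff_root[OF assms]
    by blast
qed

end
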